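(* For every $3$-graph $F\in\mathbf{FACTOR}_3^{\cdot,2}$ we have $\pi_{\cdot}(F)=0$.
   Context: A $k$-graph $H$ has edge set $E(H)\subseteq\binom{V(H)}{k}$; $\delta_2(H)$ is the minimum over pairs of vertices of the number of edges containing the pair. An $F$-factor is a set of vertex-disjoint copies of $F$ covering all vertices; $H$ is $F$-free if it contains no copy of $F$. An $(n,p,\mu,\cdot)$ $k$-graph is a $k$-graph $H$ on a vertex set $V$ with $|V|=n$ such that for all $X_1,\dots,X_k\subseteq V$, the number of $k$-tuples $(x_1,\dots,x_k)\in X_1\times\cdots\times X_k$ with $\{x_1,\dots,x_k\}\in E(H)$ is at least $p|X_1|\cdots|X_k|-\mu n^k$. $\mathbf{FACTOR}_3^{\cdot,2}$ is the class of $3$-graphs $F$ such that for all $0<p,\alpha<1$ there exist $n_0$ and $\mu>0$ such that every $(n,p,\mu,\cdot)$ $3$-graph $H$ with $\delta_2(H)\ge\alpha n$, $n\ge n_0$ and $v(F)\mid n$ has an $F$-factor. $\pi_{\cdot}(F)=\sup\{p\in[0,1]:$ for every $\mu>0$ and $n_0$ there is an $F$-free $(n,p,\mu,\cdot)$ $3$-graph with $n\ge n_0\}$. *)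

theory Defs
  imports Complex_Main
begin

definition three_graph :: "'a set \<Rightarrow> 'a set set \<Rightarrow> bool" where
  "three_graph V E \<longleftrightarrow> finite V \<and> E \<subseteq> {e. e \<subseteq> V \<and> card e = 3}"

definition min_codeg_ge :: "'a set \<Rightarrow> 'a set set \<Rightarrow> real \<Rightarrow> bool" where
  "min_codeg_ge V E d \<longleftrightarrow>
     (\<forall>x\<in>V. \<forall>y\<in>V. x \<noteq> y \<longrightarrow> real (card {e\<in>E. x \<in> e \<and> y \<in> e}) \<ge> d)"

definition dense_dot :: "'a set \<Rightarrow> 'a set set \<Rightarrow> real \<Rightarrow> real \<Rightarrow> bool" where
  "dense_dot V E p \<mu> \<longleftrightarrow>
     (\<forall>X1 X2 X3. X1 \<subseteq> V \<longrightarrow> X2 \<subseteq> V \<longrightarrow> X3 \<subseteq> V \<longrightarrow>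
        real (card {(x1, x2, x3). x1 \<in> X1 \<and> x2 \<in> X2 \<and> x3 \<in> X3 \<and> {x1, x2, x3} \<in> E})
          \<ge> p * real (card X1) * real (card X2) * real (card X3) - \<mu> * real (card V) ^ 3)"

definition embeds :: "('b \<Rightarrow> 'a) \<Rightarrow> 'b set \<Rightarrow> 'b set set \<Rightarrow> 'a set \<Rightarrow> 'a set set \<Rightarrow> bool" where
  "embeds \<phi> VF EF V E \<longleftrightarrow> inj_on \<phi> VF \<and> \<phi> ` VF \<subseteq> V \<and> (\<forall>e\<in>EF. \<phi> ` e \<in> E)"

definition F_free :: "'b set \<Rightarrow> 'b set set \<Rightarrow> 'a set \<Rightarrow> 'a set set \<Rightarrow> bool" where
  "F_free VF EF V E \<longleftrightarrow> \<not> (\<exists>\<phi>. embeds \<phi> VF EF V E)"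

definition has_F_factor :: "'b set \<Rightarrow> 'b set set \<Rightarrow> 'a set \<Rightarrow> 'a set set \<Rightarrow> bool" where
  "has_F_factor VF EF V E \<longleftrightarrow>
     (\<exists>P. \<Union>P = V \<and> (\<forall>S\<in>P. \<forall>T\<in>P. S \<noteq> T \<longrightarrow> S \<inter> T = {}) \<and>
          (\<forall>S\<in>P. \<exists>\<phi>. embeds \<phi> VF EF V E \<and> \<phi> ` VF = S))"

definition FACTOR_dot_2 :: "'b set \<Rightarrow> 'b set set \<Rightarrow> bool" where
  "FACTOR_dot_2 VF EF \<longleftrightarrow>
     (\<forall>p \<alpha>::real. 0 < p \<and> p < 1 \<and> 0 < \<alpha> \<and> \<alpha> < 1 \<longrightarrow>
        (\<exists>n0::nat. \<exists>\<mu>::real. \<mu> > 0 \<and>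
           (\<forall>n::nat. \<forall>E::nat set set.
              three_graph {0..<n} E \<longrightarrow> dense_dot {0..<n} E p \<mu> \<longrightarrow>
              min_codeg_ge {0..<n} E (\<alpha> * real n) \<longrightarrow> n \<ge> n0 \<longrightarrow>
              card VF dvd n \<longrightarrow> has_F_factor VF EF {0..<n} E)))"

definition pi_dot_set :: "'b set \<Rightarrow> 'b set set \<Rightarrow> real set" where
  "pi_dot_set VF EF = {p. 0 \<le> p \<and> p \<le> 1 \<and>
     (\<forall>\<mu>::real. \<mu> > 0 \<longrightarrow> (\<forall>n0::nat. \<exists>n::nat. \<exists>E::nat set set. n \<ge> n0 \<and>
        three_graph {0..<n} E \<and> dense_dot {0..<n} E p \<mu> \<and> F_free VF EF {0..<n} E))}"

text \<open>pi_dot(F) = sup of that set (with sup of the empty set taken as 0, i.e. sup in [0,1]).\<close>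
definition pi_dot :: "'b set \<Rightarrow> 'b set set \<Rightarrow> real" where
  "pi_dot VF EF = Sup (insert 0 (pi_dot_set VF EF))"

end

theory Submission
  imports Defs
begin

text \<open>Suppose some p > 0 lies in the set whose supremum is pi_dot F, and let v = |V(F)|.
  Take a large F-free host E0 on m vertices that is p-dense, add about m/(2v) new vertices and
  every triple meeting them. Only the O(n^2) triples with a repeated vertex can now be missed by
  the density count, so the new host is still (p/2)-dense, and every pair of vertices lies in at
  least n/(8v) edges through new vertices. But each copy of F must use a new vertex, because E0
  is F-free, and there are fewer than n/v new vertices, so there is no F-factor. This contradicts
  F \<in> FACTOR.\<close>

definition edge_triples :: "'a set set \<Rightarrow> 'a set \<Rightarrow> 'a set \<Rightarrow> 'a set \<Rightarrow> ('a \<times> 'a \<times> 'a) set" where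
  "edge_triples E X1 X2 X3 = {(x1, x2, x3). x1 \<in> X1 \<and> x2 \<in> X2 \<and> x3 \<in> X3 \<and> {x1, x2, x3} \<in> E}"

lemma dense_dot_iff_edge_triples:
  "dense_dot V E p \<mu> \<longleftrightarrow>
     (\<forall>X1 X2 X3. X1 \<subseteq> V \<longrightarrow> X2 \<subseteq> V \<longrightarrow> X3 \<subseteq> V \<longrightarrow>
        p * card X1 * card X2 * card X3 - \<mu> * real (card V) ^ 3 \<le> card (edge_triples E X1 X2 X3))"
  by (simp add: dense_dot_def edge_triples_def)

lemma min_codeg_ge_mono: "min_codeg_ge V E d' \<Longrightarrow> d \<le> d' \<Longrightarrow> min_codeg_ge V E d"
  unfolding min_codeg_ge_def by force

lemma F_free_imp_nonempty:
  assumes "three_graph VF EF" "F_free VF EF V E"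
  shows "VF \<noteq> {}"
proof
  assume "VF = {}"
  with assms(1) have "EF = {}" by (auto simp: three_graph_def)
  with \<open>VF = {}\<close> have "embeds (\<lambda>_. undefined) VF EF V E" by (simp add: embeds_def)
  with assms(2) show False by (auto simp: F_free_def)
qed

lemma card_le_F_factor_transversal:
  assumes "has_F_factor VF EF V E" "finite V" "finite A"
    and meets: "\<And>\<phi>. embeds \<phi> VF EF V E \<Longrightarrow> \<phi> ` VF \<inter> A \<noteq> {}"
  shows "card V \<le> card VF * card A"
proof -
  obtain P where PV: "\<Union>P = V" and disj: "\<forall>S\<in>P. \<forall>T\<in>P. S \<noteq> T \<longrightarrow> S \<inter> T = {}"
    and copies: "\<forall>S\<in>P. \<exists>\<phi>. embeds \<phi> VF EF V E \<and> \<phi> ` VF = S"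
    using assms(1) unfolding has_F_factor_def by blast
  have "finite P" using PV \<open>finite V\<close> finite_UnionD by blast
  have card_part: "card S = card VF" and part_meets: "S \<inter> A \<noteq> {}" if "S \<in> P" for S
    using copies meets that by (auto simp: embeds_def card_image)
  \<comment> \<open>Picking a vertex of A in each part injects the (disjoint) parts into A.\<close>
  obtain g where g: "\<And>S. S \<in> P \<Longrightarrow> g S \<in> S \<inter> A"
    using bchoice[of P "\<lambda>S x. x \<in> S \<inter> A"] part_meets by blast
  have "inj_on g P"
  proof (rule inj_onI)
    fix S T assume "S \<in> P" "T \<in> P" "g S = g T"
    then have "g S \<in> S \<inter> T" using g by fastforce
    then show "S = T" using disj \<open>S \<in> P\<close> \<open>T \<in> P\<close> by blast
  qed
  then have "card P \<le> card A"
    using g \<open>finite A\<close> by (intro card_inj_on_le) auto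
  have "card V \<le> sum card P"
    using card_Union_le_sum_card[of P] PV by simp
  also have "\<dots> = card P * card VF"
    using card_part by simp
  also have "\<dots> \<le> card VF * card A"
    using \<open>card P \<le> card A\<close> by simp
  finally show ?thesis .
qed

lemma card_nondistinct_triples_le:
  assumes "finite V"
  shows "card {(a, b, c). a \<in> V \<and> b \<in> V \<and> c \<in> V \<and> (a = b \<or> a = c \<or> b = c)} \<le> 3 * card V ^ 2"
proof -
  let ?VV = "V \<times> V"
  let ?D1 = "(\<lambda>(a, c). (a, a, c)) ` ?VV" and ?D2 = "(\<lambda>(a, b). (a, b, a)) ` ?VV"
    and ?D3 = "(\<lambda>(a, b). (a, b, b)) ` ?VV"
  have "{(a, b, c). a \<in> V \<and> b \<in> V \<and> c \<in> V \<and> (a = b \<or> a = c \<or> b = c)} \<subseteq> ?D1 \<union> ?D2 \<union> ?D3"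
  proof
    fix t assume "t \<in> {(a, b, c). a \<in> V \<and> b \<in> V \<and> c \<in> V \<and> (a = b \<or> a = c \<or> b = c)}"
    then obtain a b c where t: "t = (a, b, c)" and abc: "a \<in> V" "b \<in> V" "c \<in> V"
      and "a = b \<or> a = c \<or> b = c" by blast
    then consider "a = b" | "a = c" | "b = c" by blast
    then show "t \<in> ?D1 \<union> ?D2 \<union> ?D3"
    proof cases
      case 1 then have "t \<in> ?D1" using t abc by (auto intro!: image_eqI[where x = "(a, c)"])
      then show ?thesis by blast
    next
      case 2 then have "t \<in> ?D2" using t abc by (auto intro!: image_eqI[where x = "(a, b)"])
      then show ?thesis by blast
    next
      case 3 then have "t \<in> ?D3" using t abc by (auto intro!: image_eqI[where x = "(a, b)"])
      then show ?thesis by blast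
    qed
  qed
  then have "card {(a, b, c). a \<in> V \<and> b \<in> V \<and> c \<in> V \<and> (a = b \<or> a = c \<or> b = c)}
      \<le> card (?D1 \<union> ?D2 \<union> ?D3)"
    using assms by (intro card_mono) auto
  also have "\<dots> \<le> card ?D1 + card ?D2 + card ?D3"
    by (meson card_Un_le add_le_mono1 le_trans)
  also have "\<dots> \<le> 3 * card ?VV"
    using card_image_le[of ?VV "\<lambda>(a, c). (a, a, c)"] card_image_le[of ?VV "\<lambda>(a, b). (a, b, a)"]
      card_image_le[of ?VV "\<lambda>(a, b). (a, b, b)"] assms by simp
  finally show ?thesis
    by (simp add: card_cartesian_product power2_eq_square)
qed

lemma host_size_choice:
  fixes v m :: nat
  assumes "1 \<le> v" "3 * v * (2 * v - 1) \<le> m"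
  defines "n \<equiv> 2 * v * (m div (2 * v - 1))"
  shows "m < n" "v * (n - m) < n" "1 / (8 * real v) * n \<le> real (n - m) - 2"
proof -
  define d where "d = 2 * v - 1"
  define s where "s = m div d"
  define r where "r = m mod d"
  have d: "0 < d" "2 * v = d + 1" using assms(1) by (simp_all add: d_def)
  have m: "m = d * s + r" by (simp add: s_def r_def)
  have "r < d" using d by (simp add: r_def)
  have "3 * v \<le> s"
    using assms(2) d by (simp add: s_def d_def less_eq_div_iff_mult_less_eq mult.commute)
  have n: "n = d * s + s" by (simp add: n_def d_def[symmetric] s_def d)
  \<comment> \<open>n = (d + 1) s and m = d s + r, so n - m = s - r, with r < d small against s \<ge> 3v.\<close>
  have "r < s" using \<open>r < d\<close> \<open>3 * v \<le> s\<close> d by linarith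
  then show "m < n" using m n by simp
  define t where "t = s - r"
  have st: "s = t + r" and nm: "n - m = t" using m n \<open>r < s\<close> by (simp_all add: t_def)
  have n2: "n = 2 * v * t + 2 * v * r"
    using n d(2) st by (simp add: algebra_simps)
  have "v * t < 2 * v * t" using assms(1) \<open>r < s\<close> st by simp
  also have "\<dots> \<le> n" using n2 by simp
  finally show "v * (n - m) < n" using nm by simp
  have "2 * r + 16 \<le> 6 * t" using \<open>r < d\<close> \<open>3 * v \<le> s\<close> d st by linarith
  then have "v * (2 * r + 16) \<le> v * (6 * t)" by simp
  then have "n + 16 * v \<le> 8 * v * (n - m)"
    using n2 nm by (simp add: algebra_simps)
  then have "real (n + 16 * v) \<le> real (8 * v * (n - m))"
    by (simp only: of_nat_le_iff)
  then have "real n \<le> 8 * v * (real (n - m) - 2)"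
    unfolding of_nat_add of_nat_mult of_nat_numeral by (simp add: algebra_simps)
  then show "1 / (8 * real v) * n \<le> real (n - m) - 2"
    using assms(1) by (simp add: divide_simps mult.commute del: of_nat_diff)
qed

definition complete_extension :: "nat \<Rightarrow> nat \<Rightarrow> nat set set \<Rightarrow> nat set set" where
  "complete_extension m n E0 = E0 \<union> {e. e \<subseteq> {0..<n} \<and> card e = 3 \<and> (\<exists>x\<in>e. m \<le> x)}"

lemma complete_extension_three_graph:
  assumes "three_graph {0..<m} E0" "m \<le> n"
  shows "three_graph {0..<n} (complete_extension m n E0)"
  using assms by (fastforce simp: three_graph_def complete_extension_def)

lemma complete_extension_min_codeg:
  assumes "three_graph {0..<m} E0" "m \<le> n"
  shows "min_codeg_ge {0..<n} (complete_extension m n E0) (real (n - m) - 2)"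
  unfolding min_codeg_ge_def
proof (intro ballI impI)
  fix x y assume xy: "x \<in> {0..<n}" "y \<in> {0..<n}" "x \<noteq> y"
  let ?E = "complete_extension m n E0"
  have "finite ?E"
    using complete_extension_three_graph[OF assms]
    by (auto simp: three_graph_def intro: finite_subset[of _ "Pow {0..<n}"])
  \<comment> \<open>Every new vertex b completes the pair to an edge.\<close>
  have "inj_on (\<lambda>b. {x, y, b}) ({m..<n} - {x, y})"
    by (rule inj_onI) (auto simp: insert_eq_iff)
  moreover have "(\<lambda>b. {x, y, b}) ` ({m..<n} - {x, y}) \<subseteq> {e \<in> ?E. x \<in> e \<and> y \<in> e}"
    using xy by (auto simp: complete_extension_def)
  ultimately have "card ({m..<n} - {x, y}) \<le> card {e \<in> ?E. x \<in> e \<and> y \<in> e}"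
    using \<open>finite ?E\<close> by (intro card_inj_on_le) auto
  moreover have "card {m..<n} - card {x, y} \<le> card ({m..<n} - {x, y})"
    by (rule diff_card_le_card_Diff) simp
  moreover have "card {x, y} = 2" using xy by simp
  ultimately have "n - m \<le> card {e \<in> ?E. x \<in> e \<and> y \<in> e} + 2"
    by simp
  then show "real (n - m) - 2 \<le> card {e \<in> ?E. x \<in> e \<and> y \<in> e}"
    by linarith
qed

lemma edge_triples_complete_extension_ge:
  assumes dense: "dense_dot {0..<m} E0 p \<mu>" and "p \<le> 1"
    and X: "X1 \<subseteq> {0..<n}" "X2 \<subseteq> {0..<n}" "X3 \<subseteq> {0..<n}"
  shows "p * card X1 * card X2 * card X3 - \<mu> * real m ^ 3 - 3 * real n ^ 2
    \<le> card (edge_triples (complete_extension m n E0) X1 X2 X3)"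
proof -
  define Y1 where "Y1 = X1 \<inter> {0..<m}"
  define Y2 where "Y2 = X2 \<inter> {0..<m}"
  define Y3 where "Y3 = X3 \<inter> {0..<m}"
  define P where "P = X1 \<times> X2 \<times> X3"
  define Q where "Q = Y1 \<times> Y2 \<times> Y3"
  define D where "D = {(a, b, c). a \<in> {0..<n} \<and> b \<in> {0..<n} \<and> c \<in> {0..<n} \<and> (a = b \<or> a = c \<or> b = c)}"
  let ?S = "edge_triples (complete_extension m n E0) X1 X2 X3"
  let ?R = "edge_triples E0 Y1 Y2 Y3"
  have "finite X1" "finite X2" "finite X3" using X finite_subset by blast+
  then have finP: "finite P" and finQ: "finite Q" and QP: "Q \<subseteq> P"
    by (auto simp: P_def Q_def Y1_def Y2_def Y3_def)
  have finS: "finite ?S" by (rule finite_subset[OF _ finP]) (auto simp: edge_triples_def P_def)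
  \<comment> \<open>Triples of distinct vertices not all below m span an edge of the extension.\<close>
  have "P - Q - D \<subseteq> ?S"
    using X by (auto simp: P_def Q_def D_def Y1_def Y2_def Y3_def edge_triples_def complete_extension_def)
  moreover have "?R \<subseteq> ?S" "?R \<inter> (P - Q - D) = {}"
    by (auto simp: edge_triples_def complete_extension_def Q_def Y1_def Y2_def Y3_def)
  ultimately have "card ?R + card (P - Q - D) \<le> card ?S"
    using finS by (metis card_Un_disjoint card_mono finite_subset Un_least)
  moreover have "card P \<le> card (P - Q - D) + card Q + card D"
  proof -
    have "finite D" by (rule finite_subset[of _ "{0..<n} \<times> {0..<n} \<times> {0..<n}"]) (auto simp: D_def)
    then have "card P \<le> card ((P - Q - D) \<union> Q \<union> D)"
      using finP finQ by (intro card_mono) auto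
    also have "\<dots> \<le> card (P - Q - D) + card Q + card D"
      by (meson card_Un_le add_le_mono1 le_trans)
    finally show ?thesis .
  qed
  moreover have "card D \<le> 3 * n ^ 2"
    using card_nondistinct_triples_le[of "{0..<n}"] by (simp add: D_def)
  ultimately have "card ?R + card P \<le> card ?S + card Q + 3 * n ^ 2"
    by linarith
  then have "real (card ?R + card P) \<le> real (card ?S + card Q + 3 * n ^ 2)"
    by (simp only: of_nat_le_iff)
  then have counting: "real (card ?R) + card P \<le> card ?S + card Q + 3 * real n ^ 2"
    by simp
  have "p * card Q - \<mu> * real m ^ 3 \<le> card ?R"
    using dense unfolding dense_dot_iff_edge_triples
    by (auto simp: Q_def Y1_def Y2_def Y3_def card_cartesian_product mult.assoc)
  moreover have "p * card P \<le> p * card Q + (real (card P) - card Q)"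
    using card_mono[OF finP QP] \<open>p \<le> 1\<close> mult_right_mono[of p 1 "real (card P) - card Q"]
    by (simp add: algebra_simps)
  ultimately show ?thesis
    using counting by (simp add: P_def card_cartesian_product mult.assoc)
qed

lemma complete_extension_dense_dot:
  assumes "dense_dot {0..<m} E0 p (\<mu> / 2)" "0 \<le> q" "q \<le> p" "p \<le> 1" "m \<le> n" "6 \<le> \<mu> * n"
  shows "dense_dot {0..<n} (complete_extension m n E0) q \<mu>"
  unfolding dense_dot_iff_edge_triples
proof (intro allI impI)
  fix X1 X2 X3 assume X: "X1 \<subseteq> {0..<n}" "X2 \<subseteq> {0..<n}" "X3 \<subseteq> {0..<n}"
  define PX where "PX = real (card X1) * card X2 * card X3"
  have "0 \<le> \<mu>"
    using \<open>6 \<le> \<mu> * n\<close> by (smt (verit) mult_nonpos_nonneg of_nat_0_le_iff)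
  moreover have "q * PX \<le> p * PX" unfolding PX_def using \<open>q \<le> p\<close> by (simp add: mult_right_mono)
  moreover have "\<mu> / 2 * real m ^ 3 \<le> \<mu> / 2 * real n ^ 3"
    using assms \<open>0 \<le> \<mu>\<close> by (intro mult_left_mono power_mono) auto
  moreover have "3 * real n ^ 2 \<le> \<mu> / 2 * real n ^ 3"
    using mult_right_mono[OF \<open>6 \<le> \<mu> * n\<close>, of "real n ^ 2"] by (simp add: power2_eq_square power3_eq_cube)
  moreover have "p * PX - \<mu> / 2 * real m ^ 3 - 3 * real n ^ 2
      \<le> card (edge_triples (complete_extension m n E0) X1 X2 X3)"
    unfolding PX_def using edge_triples_complete_extension_ge[OF assms(1,4) X] by (simp add: mult.assoc)
  ultimately show "q * card X1 * card X2 * card X3 - \<mu> * real (card {0..<n}) ^ 3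
      \<le> card (edge_triples (complete_extension m n E0) X1 X2 X3)"
    unfolding PX_def by (simp add: mult.assoc)
qed

lemma F_copy_in_complete_extension_meets_new_vertices:
  assumes "F_free VF EF {0..<m} E0" "\<forall>e\<in>EF. e \<subseteq> VF"
    and "embeds \<phi> VF EF {0..<n} (complete_extension m n E0)"
  shows "\<phi> ` VF \<inter> {m..<n} \<noteq> {}"
proof
  assume "\<phi> ` VF \<inter> {m..<n} = {}"
  moreover have "\<phi> ` VF \<subseteq> {0..<n}"
    using assms(3) by (simp add: embeds_def)
  ultimately have old: "\<phi> ` VF \<subseteq> {0..<m}"
    by (auto simp: subset_iff disjoint_iff not_le)
  \<comment> \<open>Edges of the extension that avoid the new vertices are edges of E0.\<close>
  have "\<phi> ` e \<in> E0" if "e \<in> EF" for e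
  proof -
    have "\<phi> ` e \<subseteq> {0..<m}" using old that assms(2) by blast
    then show ?thesis
      using that assms(3) by (fastforce simp: embeds_def complete_extension_def)
  qed
  with assms(3) old have "embeds \<phi> VF EF {0..<m} E0"
    by (simp add: embeds_def)
  with assms(1) show False
    by (auto simp: F_free_def)
qed

lemma complete_extension_without_F_factor:
  fixes VF :: "'b set" and EF :: "'b set set"
  assumes F: "three_graph VF EF" "VF \<noteq> {}"
    and E0: "three_graph {0..<m} E0" "dense_dot {0..<m} E0 p (\<mu> / 2)" "F_free VF EF {0..<m} E0"
    and "0 \<le> p" "p \<le> 1" "0 < \<mu>"
    and m: "3 * card VF * (2 * card VF - 1) + nat \<lceil>6 / \<mu>\<rceil> \<le> m"
  shows "\<exists>n>m. \<exists>E. card VF dvd n \<and> three_graph {0..<n} E \<and> dense_dot {0..<n} E (p / 2) \<mu> \<and>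
    min_codeg_ge {0..<n} E (1 / (8 * real (card VF)) * n) \<and> \<not> has_F_factor VF EF {0..<n} E"
proof -
  define v where "v = card VF"
  have "1 \<le> v" using F by (simp add: v_def three_graph_def Suc_le_eq card_gt_0_iff)
  define n where "n = 2 * v * (m div (2 * v - 1))"
  have "m < n" "v * (n - m) < n" "1 / (8 * real v) * n \<le> real (n - m) - 2"
    using host_size_choice[OF \<open>1 \<le> v\<close>] m by (auto simp: n_def v_def)
  let ?E = "complete_extension m n E0"
  have "6 \<le> \<mu> * n"
  proof -
    have "6 / \<mu> \<le> n" using m \<open>m < n\<close> by linarith
    then show ?thesis using \<open>0 < \<mu>\<close> by (simp add: field_simps)
  qed
  have "min_codeg_ge {0..<n} ?E (1 / (8 * real v) * n)"
    using \<open>1 / (8 * real v) * n \<le> real (n - m) - 2\<close>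
    by (rule min_codeg_ge_mono[OF complete_extension_min_codeg[OF E0(1) less_imp_le[OF \<open>m < n\<close>]]])
  moreover have "three_graph {0..<n} ?E"
    using complete_extension_three_graph[OF E0(1)] \<open>m < n\<close> by simp
  moreover have "dense_dot {0..<n} ?E (p / 2) \<mu>"
    using \<open>0 \<le> p\<close> \<open>p \<le> 1\<close> \<open>m < n\<close> \<open>6 \<le> \<mu> * n\<close>
    by (intro complete_extension_dense_dot[OF E0(2)]) auto
  moreover have "\<not> has_F_factor VF EF {0..<n} ?E"
  proof
    assume "has_F_factor VF EF {0..<n} ?E"
    moreover have "\<forall>e\<in>EF. e \<subseteq> VF" using F(1) by (auto simp: three_graph_def)
    ultimately have "card {0..<n} \<le> card VF * card {m..<n}"
      using F_copy_in_complete_extension_meets_new_vertices[OF E0(3)]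
      by (intro card_le_F_factor_transversal) auto
    with \<open>v * (n - m) < n\<close> show False by (simp add: v_def)
  qed
  moreover have "v dvd n" by (simp add: n_def)
  ultimately have "v dvd n \<and> three_graph {0..<n} ?E \<and> dense_dot {0..<n} ?E (p / 2) \<mu> \<and>
      min_codeg_ge {0..<n} ?E (1 / (8 * real v) * n) \<and> \<not> has_F_factor VF EF {0..<n} ?E"
    by blast
  with \<open>m < n\<close> show ?thesis
    unfolding v_def by blast
qed

lemma pi_dot_set_subset_zero:
  fixes VF :: "'b set" and EF :: "'b set set"
  assumes F: "three_graph VF EF" and factor: "FACTOR_dot_2 VF EF"
  shows "pi_dot_set VF EF \<subseteq> {0}"
proof
  fix p assume "p \<in> pi_dot_set VF EF"
  then have "0 \<le> p" "p \<le> 1" and F_free_hosts: "\<And>\<mu> n0. \<mu> > 0 \<Longrightarrow> \<exists>(m::nat) E0. m \<ge> n0 \<and>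
      three_graph {0..<m} E0 \<and> dense_dot {0..<m} E0 p \<mu> \<and> F_free VF EF {0..<m} E0"
    by (auto simp: pi_dot_set_def)
  show "p \<in> {0}"
  proof (rule ccontr)
    assume "p \<notin> {0}"
    with \<open>0 \<le> p\<close> have "0 < p" by simp
    define v where "v = card VF"
    have "VF \<noteq> {}" using F_free_hosts[of 1 0] F_free_imp_nonempty[OF F] by auto
    then have "1 \<le> v" using F by (simp add: v_def three_graph_def Suc_le_eq card_gt_0_iff)
    then have "0 < 1 / (8 * real v)" "1 / (8 * real v) < 1" by simp_all
    moreover have "0 < p / 2" "p / 2 < 1" using \<open>0 < p\<close> \<open>p \<le> 1\<close> by simp_all
    ultimately obtain n0 \<mu> where "\<mu> > 0" and factors: "\<And>n E. three_graph {0..<n} E \<Longrightarrow>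
        dense_dot {0..<n} E (p / 2) \<mu> \<Longrightarrow> min_codeg_ge {0..<n} E (1 / (8 * real v) * n) \<Longrightarrow>
        n \<ge> n0 \<Longrightarrow> v dvd n \<Longrightarrow> has_F_factor VF EF {0..<n} E"
      using factor unfolding FACTOR_dot_2_def v_def by meson
    obtain m E0 where m: "m \<ge> n0 + 3 * v * (2 * v - 1) + nat \<lceil>6 / \<mu>\<rceil>"
      and E0: "three_graph {0..<m} E0" "dense_dot {0..<m} E0 p (\<mu> / 2)" "F_free VF EF {0..<m} E0"
      using F_free_hosts[of "\<mu> / 2"] \<open>\<mu> > 0\<close> by (meson half_gt_zero)
    moreover have "3 * card VF * (2 * card VF - 1) + nat \<lceil>6 / \<mu>\<rceil> \<le> m"
      using m by (simp add: v_def)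
    ultimately obtain n E where "n > m" "v dvd n" "three_graph {0..<n} E" "dense_dot {0..<n} E (p / 2) \<mu>"
      "min_codeg_ge {0..<n} E (1 / (8 * real v) * n)" "\<not> has_F_factor VF EF {0..<n} E"
      using complete_extension_without_F_factor[OF F \<open>VF \<noteq> {}\<close> _ _ _ \<open>0 \<le> p\<close> \<open>p \<le> 1\<close> \<open>\<mu> > 0\<close>]
      unfolding v_def by blast
    moreover have "n0 \<le> n" using m \<open>n > m\<close> by simp
    ultimately show False using factors by blast
  qed
qed

theorem mainTheorem14:
  fixes VF :: "'b set" and EF :: "'b set set"
  assumes "three_graph VF EF"
    and "FACTOR_dot_2 VF EF"
  shows "pi_dot VF EF = 0"
proof -
  have "insert 0 (pi_dot_set VF EF) = {0}"
    using pi_dot_set_subset_zero[OF assms] by blast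
  then show ?thesis
    by (simp only: pi_dot_def cSup_singleton)
qed

end
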